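(* For all $n\ge0$, \[ c_{n+3}^2-1=\sum_{k=0}^n\left\{c_k^2+2\sum_{i=0}^k p_{k+2-i}c_i^2\right\}. \]
   Context: The Narayana's cows numbers $c_n$ are defined by $c_n=\delta_{n,0}+c_{n-1}+c_{n-3}$ for $n\ge0$, $c_n=0$ for $n<0$. The Padovan numbers $p_n$ are defined by $p_n=\delta_{n,0}+p_{n-2}+p_{n-3}$ for $n\ge0$, $p_n=0$ for $n<0$. $\delta_{i,j}$ is $1$ if $i=j$ and $0$ otherwise. *)

theory Defs
  imports Main
begin

text \<open>Narayana's cows numbers: c_n = [n=0] + c_(n-1) + c_(n-3), c_n = 0 for n < 0.\<close>
fun cows :: "nat \<Rightarrow> nat" where
  "cows 0 = 1"
| "cows (Suc 0) = 1"
| "cows (Suc (Suc 0)) = 1"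
| "cows (Suc (Suc (Suc n))) = cows (Suc (Suc n)) + cows n"

text \<open>Padovan numbers: p_n = [n=0] + p_(n-2) + p_(n-3), p_n = 0 for n < 0.\<close>
fun padovan :: "nat \<Rightarrow> nat" where
  "padovan 0 = 1"
| "padovan (Suc 0) = 0"
| "padovan (Suc (Suc 0)) = 1"
| "padovan (Suc (Suc (Suc n))) = padovan (Suc n) + padovan n"

end

theory Submission
  imports Defs
begin

text \<open>The inner sum is the Padovan convolution of the squared cows numbers, and it equals
  \<open>c(k+2) c(k)\<close>: both sides satisfy the same third-order recurrence, inherited from
  \<open>p(m+3) = p(m+1) + p(m)\<close>, and agree initially. Since \<open>c(k+3) - c(k+2) = c(k)\<close>, each outer
  summand \<open>c(k)\<^sup>2 + 2 c(k+2) c(k)\<close> equals \<open>c(k+3)\<^sup>2 - c(k+2)\<^sup>2\<close>, so the outer sum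
  telescopes to \<open>c(n+3)\<^sup>2 - c(2)\<^sup>2\<close>, and \<open>c(2) = 1\<close>.\<close>

lemma padovan_add3: "padovan (m + 3) = padovan (m + 1) + padovan m"
  by (simp add: numeral_3_eq_3)

lemma cows_add3: "cows (m + 3) = cows (m + 2) + cows m"
  by (simp add: numeral_3_eq_3 numeral_2_eq_2)

definition padovan_conv :: "(nat \<Rightarrow> 'a::comm_semiring_1) \<Rightarrow> nat \<Rightarrow> 'a" where
  "padovan_conv f k = (\<Sum>i\<le>k. of_nat (padovan (k + 2 - i)) * f i)"

lemma padovan_conv_add3:
  "padovan_conv f (n + 3) = padovan_conv f (n + 1) + padovan_conv f n + f (n + 2) + f (n + 3)"
proof -
  let ?g = "\<lambda>d. \<Sum>i\<le>n. of_nat (padovan (n + d - i)) * f i"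
  have "padovan (n + 5 - i) = padovan (n + 3 - i) + padovan (n + 2 - i)" if "i \<le> n" for i
  proof -
    from that have "n + 5 - i = (n + 2 - i) + 3" "n + 3 - i = (n + 2 - i) + 1"
      by simp_all
    then show ?thesis
      by (simp only: padovan_add3)
  qed
  then have split_low: "?g 5 = ?g 3 + ?g 2"
    by (simp add: sum.distrib[symmetric] distrib_right)
  have "padovan_conv f (n + 3) = ?g 5 + f (n + 1) + f (n + 2) + f (n + 3)"
    by (simp add: padovan_conv_def numeral_3_eq_3 numeral_2_eq_2 eval_nat_numeral add_ac)
  moreover have "padovan_conv f (n + 1) = ?g 3 + f (n + 1)"
    by (simp add: padovan_conv_def eval_nat_numeral)
  moreover have "padovan_conv f n = ?g 2"
    by (simp add: padovan_conv_def)
  ultimately show ?thesis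
    using split_low by (simp add: add_ac)
qed

lemma padovan_conv_cows_squared:
  "padovan_conv (\<lambda>i. cows i ^ 2) k = cows (k + 2) * cows k"
proof (induction k rule: padovan.induct)
  \<comment> \<open>its step case assumes the claim at \<open>n + 1\<close> and \<open>n\<close>, as \<open>padovan_conv_add3\<close> needs\<close>
  case (4 n)
  have "cows (n + 5) = cows (n + 3) + cows (n + 2) + cows (n + 1)"
       "cows (n + 4) = cows (n + 3) + cows (n + 1)"
       "cows (n + 3) = cows (n + 2) + cows n"
    using cows_add3[of "n + 2"] cows_add3[of "n + 1"] cows_add3[of n]
    by (simp_all add: eval_nat_numeral)
  with 4 show ?case
    using padovan_conv_add3[of "\<lambda>i. cows i ^ 2" n]
    by (simp add: eval_nat_numeral power2_eq_square algebra_simps)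
qed (simp_all add: padovan_conv_def eval_nat_numeral)

lemma cows_add3_squared:
  "cows (k + 3) ^ 2 = cows (k + 2) ^ 2 + cows k ^ 2 + 2 * (cows (k + 2) * cows k)"
  by (simp add: cows_add3 power2_sum)

theorem mainTheorem14:
  fixes n :: nat
  shows "int (cows (n + 3))^2 - 1 =
    (\<Sum>k = 0..n. int (cows k)^2 + 2 * (\<Sum>i = 0..k. int (padovan (k + 2 - i)) * int (cows i)^2))"
proof -
  let ?sq = "\<lambda>k. int (cows (k + 2)) ^ 2"
  have "(\<Sum>i = 0..k. int (padovan (k + 2 - i)) * int (cows i)^2) = int (cows (k + 2) * cows k)"
    for k
    using arg_cong[OF padovan_conv_cows_squared[of k], of int]
    by (simp add: padovan_conv_def atLeast0AtMost)
  moreover have "int (cows k)^2 + 2 * int (cows (k + 2) * cows k) = ?sq (Suc k) - ?sq k" for k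
    using arg_cong[OF cows_add3_squared[of k], of int] by (simp add: numeral_3_eq_3 del: cows.simps)
  ultimately have "(\<Sum>k = 0..n. int (cows k)^2
      + 2 * (\<Sum>i = 0..k. int (padovan (k + 2 - i)) * int (cows i)^2))
    = (\<Sum>k = 0..n. ?sq (Suc k) - ?sq k)"
    by simp
  also have "\<dots> = ?sq (Suc n) - ?sq 0"
    by (rule sum_Suc_diff) simp
  finally show ?thesis
    by (simp add: eval_nat_numeral)
qed

end
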